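(* Let $\Omega \subseteq \mathbb{R}^d$ be a bounded open convex set and $K \subseteq \mathbb{R}^d$ a compact set whose interior contains the origin. Then $d_{\mathrm{CT},K}$ is a distance on $\mathcal{P}(\Omega)$: (i) $d_{\mathrm{CT},K}(\mu_+,\mu_-) \geq 0$ for all $\mu_+,\mu_- \in \mathcal{P}(\Omega)$; (ii) $d_{\mathrm{CT},K}(\mu_+,\mu_-) = 0$ if and only if $\mu_+ = \mu_-$; (iii) for all $\mu_1,\mu_2,\mu_3 \in \mathcal{P}(\Omega)$, $d_{\mathrm{CT},K}(\mu_1,\mu_2) \leq d_{\mathrm{CT},K}(\mu_1,\mu_3) + d_{\mathrm{CT},K}(\mu_3,\mu_2)$.
   Context: $\mathcal{P}(\Omega)$ is the set of Borel probability measures on $\Omega$. Let $\mathcal{A} = \{ u : \Omega \to \mathbb{R} \,:\, u \text{ convex and } \nabla u \in K \text{ almost everywhere}\}$. The Choquet–Toland discrepancy is $D_{\mathrm{CT},K}(\mu_+\|\mu_-) = \sup_{\nu \in \mathcal{P}(K)} \{\frac12 W_2^2(\mu_+,\nu) - \frac12 W_2^2(\mu_-,\nu)\}$ ($W_2$ the 2-Wasserstein distance), the Variational Dominance Criterion is $\mathrm{VDC}_K(\mu_+\|\mu_-) = \sup_{u\in\mathcal{A}} \int_\Omega u\, d(\mu_- - \mu_+)$, and the Choquet–Toland distance is $d_{\mathrm{CT},K}(\mu_+,\mu_-) = D_{\mathrm{CT},K}(\mu_+\|\mu_-) + D_{\mathrm{CT},K}(\mu_-\|\mu_+)$, which (by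 Toland duality) equals $\mathrm{VDC}_K(\mu_+\|\mu_-) + \mathrm{VDC}_K(\mu_-\|\mu_+)$. *)

theory Defs
  imports "HOL-Probability.Probability"
begin

text \<open>Borel probability measures on a Borel set S of the ambient Euclidean space,
  represented as probability measures on the Borel sigma algebra of the whole space
  that are concentrated on S.\<close>
definition prob_on :: "'a::euclidean_space set \<Rightarrow> 'a measure \<Rightarrow> bool" where
  "prob_on S \<mu> \<longleftrightarrow> sets \<mu> = sets borel \<and> prob_space \<mu> \<and> emeasure \<mu> S = 1"

definition couplings :: "'a::euclidean_space measure \<Rightarrow> 'a measure \<Rightarrow> ('a \<times> 'a) measure set" where
  "couplings \<mu> \<nu> = {\<pi>. sets \<pi> = sets (borel \<Otimes>\<^sub>M borel) \<and> prob_space \<pi> \<and>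
      distr \<pi> borel fst = \<mu> \<and> distr \<pi> borel snd = \<nu>}"

definition W2sq :: "'a::euclidean_space measure \<Rightarrow> 'a measure \<Rightarrow> ennreal" where
  "W2sq \<mu> \<nu> = (INF \<pi>\<in>couplings \<mu> \<nu>. \<integral>\<^sup>+ p. ennreal ((norm (fst p - snd p))\<^sup>2) \<partial>\<pi>)"

definition D_CT :: "'a::euclidean_space set \<Rightarrow> 'a measure \<Rightarrow> 'a measure \<Rightarrow> real" where
  "D_CT K \<mu>p \<mu>m = (SUP \<nu>\<in>{\<nu>. prob_on K \<nu>}.
      (1/2) * enn2real (W2sq \<mu>p \<nu>) - (1/2) * enn2real (W2sq \<mu>m \<nu>))"

definition d_CT :: "'a::euclidean_space set \<Rightarrow> 'a measure \<Rightarrow> 'a measure \<Rightarrow> real" where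
  "d_CT K \<mu>p \<mu>m = D_CT K \<mu>p \<mu>m + D_CT K \<mu>m \<mu>p"

end

theory Submission
  imports Defs
begin

(* For a potential u that is a maximum of finitely many affine functions with slopes in K, the
   push-forward nu of mu2 under the gradient selection T of u is an admissible competitor in D_CT.
   Weak Kantorovich duality with the potentials |x|^2 - 2 u(x) and |y|^2 - 2 u*(y) bounds
   W_2^2(mu1, nu) from below, while the transport map T bounds W_2^2(mu2, nu) from above, giving
     D_CT(mu1 || mu2) >= (m(mu1) - m(mu2)) / 2 - int u d(mu1 - mu2),   m = second moment.
   Taking u = 0 as well, d_CT(mu1, mu2) = 0 forces int u dmu1 = int u dmu2 for all such u.
   Differences of two such maxima are tents max 0 (min C (pieces)); as K contains a ball around 0,
   rescaled tents converge boundedly to indicators of boxes, so mu1 and mu2 agree on boxes.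
   Nonnegativity and the triangle inequality come directly from the supremum of differences. *)

lemma prob_on_sets: "prob_on S \<mu> \<Longrightarrow> sets \<mu> = sets borel"
  by (simp add: prob_on_def)

lemma prob_on_space: "prob_on S \<mu> \<Longrightarrow> space \<mu> = UNIV"
  using sets_eq_imp_space_eq[OF prob_on_sets] by fastforce

lemma prob_on_borel_set: "prob_on S \<mu> \<Longrightarrow> S \<in> sets borel"
  unfolding prob_on_def using emeasure_notin_sets by fastforce

lemma prob_on_AE:
  assumes \<mu>: "prob_on S \<mu>"
  shows "AE x in \<mu>. x \<in> S"
proof -
  interpret prob_space \<mu> using \<mu> by (simp add: prob_on_def)
  have "emeasure \<mu> S = 1" using \<mu> by (simp add: prob_on_def)
  moreover have "S \<in> events" using \<mu> by (simp add: prob_on_sets prob_on_borel_set)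
  ultimately show ?thesis by (simp add: AE_in_set_eq_1 emeasure_eq_measure)
qed

lemma prob_on_integrable:
  fixes f :: "'a::euclidean_space \<Rightarrow> real"
  assumes \<mu>: "prob_on S \<mu>" and f: "f \<in> borel_measurable borel"
    and bound: "\<And>x. x \<in> S \<Longrightarrow> \<bar>f x\<bar> \<le> B"
  shows "integrable \<mu> f"
proof -
  interpret prob_space \<mu> using \<mu> by (simp add: prob_on_def)
  show ?thesis
  proof (rule integrable_const_bound)
    show "AE x in \<mu>. norm (f x) \<le> B"
      using prob_on_AE[OF \<mu>] by eventually_elim (simp add: bound)
    show "f \<in> borel_measurable \<mu>"
      using f by (simp add: measurable_cong_sets[OF prob_on_sets[OF \<mu>] refl])
  qed
qed

lemma prob_on_distr:
  assumes \<mu>: "prob_on S \<mu>" and T: "T \<in> borel_measurable borel"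
    and S': "S' \<in> sets borel" and TS': "\<And>x. T x \<in> S'"
  shows "prob_on S' (distr \<mu> borel T)"
proof -
  interpret prob_space \<mu> using \<mu> by (simp add: prob_on_def)
  have T\<mu>: "T \<in> measurable \<mu> borel"
    using T by (simp add: measurable_cong_sets[OF prob_on_sets[OF \<mu>] refl])
  have "emeasure (distr \<mu> borel T) S' = emeasure \<mu> (space \<mu>)"
    using TS' by (simp add: emeasure_distr[OF T\<mu> S'] vimage_def)
  then show ?thesis
    unfolding prob_on_def using prob_space_distr[OF T\<mu>] by (simp add: emeasure_space_1)
qed

lemma norm_diff_sq_le_cball:
  fixes x y :: "'a::real_normed_vector"
  assumes "x \<in> cball 0 R" "y \<in> cball 0 R"
  shows "(norm (x - y))\<^sup>2 \<le> 4 * R\<^sup>2"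
proof -
  have "norm (x - y) \<le> 2 * R"
    using assms norm_triangle_ineq4[of x y] by simp
  then show ?thesis
    using power_mono[of "norm (x - y)" "2 * R" 2] by (simp add: power_mult_distrib)
qed

lemma couplingD:
  assumes "\<pi> \<in> couplings \<mu> \<nu>"
  shows "sets \<pi> = sets (borel \<Otimes>\<^sub>M borel)" "prob_space \<pi>"
    and "distr \<pi> borel fst = \<mu>" "distr \<pi> borel snd = \<nu>"
  using assms by (auto simp: couplings_def)

lemma measurable_coupling:
  "\<pi> \<in> couplings \<mu> \<nu> \<Longrightarrow> measurable \<pi> N = measurable (borel \<Otimes>\<^sub>M borel) N"
  using measurable_cong_sets[OF couplingD(1) refl] by blast

lemma coupling_integral_marginals:
  fixes f g :: "'a::euclidean_space \<Rightarrow> real"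
  assumes \<pi>: "\<pi> \<in> couplings \<mu> \<nu>"
    and f: "f \<in> borel_measurable borel" and g: "g \<in> borel_measurable borel"
  shows "(\<integral>p. f (fst p) \<partial>\<pi>) = (\<integral>x. f x \<partial>\<mu>)" and "(\<integral>p. g (snd p) \<partial>\<pi>) = (\<integral>y. g y \<partial>\<nu>)"
  using integral_distr[of fst \<pi> borel f] integral_distr[of snd \<pi> borel g] f g
  by (simp_all add: couplingD(3,4)[OF \<pi>] measurable_coupling[OF \<pi>])

lemma coupling_integrable_marginals:
  fixes f g :: "'a::euclidean_space \<Rightarrow> real"
  assumes \<pi>: "\<pi> \<in> couplings \<mu> \<nu>"
    and f: "f \<in> borel_measurable borel" "integrable \<mu> f"
    and g: "g \<in> borel_measurable borel" "integrable \<nu> g"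
  shows "integrable \<pi> (\<lambda>p. f (fst p))" and "integrable \<pi> (\<lambda>p. g (snd p))"
  using integrable_distr_eq[of fst \<pi> borel f] integrable_distr_eq[of snd \<pi> borel g] f g
  by (simp_all add: couplingD(3,4)[OF \<pi>] measurable_coupling[OF \<pi>])

lemma coupling_AE_supports:
  assumes \<pi>: "\<pi> \<in> couplings \<mu> \<nu>" and \<mu>: "prob_on S \<mu>" and \<nu>: "prob_on S' \<nu>"
  shows "AE p in \<pi>. fst p \<in> S \<and> snd p \<in> S'"
proof -
  have [measurable]: "S \<in> sets borel" "S' \<in> sets borel"
    using \<mu> \<nu> by (simp_all add: prob_on_borel_set)
  have "AE x in distr \<pi> borel fst. x \<in> S"
    unfolding couplingD(3)[OF \<pi>] by (rule prob_on_AE[OF \<mu>])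
  moreover have "AE y in distr \<pi> borel snd. y \<in> S'"
    unfolding couplingD(4)[OF \<pi>] by (rule prob_on_AE[OF \<nu>])
  ultimately show ?thesis
    by (simp add: AE_distr_iff measurable_coupling[OF \<pi>] AE_conj_iff)
qed

lemma coupling_cost_bounded:
  fixes \<mu> \<nu> :: "'a::euclidean_space measure"
  assumes \<pi>: "\<pi> \<in> couplings \<mu> \<nu>" and \<mu>: "prob_on S \<mu>" and \<nu>: "prob_on S' \<nu>"
    and S: "S \<subseteq> cball 0 R" and S': "S' \<subseteq> cball 0 R"
  shows "AE p in \<pi>. (norm (fst p - snd p))\<^sup>2 \<le> 4 * R\<^sup>2"
  using coupling_AE_supports[OF \<pi> \<mu> \<nu>] by eventually_elim (use S S' in \<open>auto intro: norm_diff_sq_le_cball\<close>)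

lemma coupling_cost_integrable:
  fixes \<mu> \<nu> :: "'a::euclidean_space measure"
  assumes \<pi>: "\<pi> \<in> couplings \<mu> \<nu>" and "prob_on S \<mu>" "prob_on S' \<nu>"
    and "S \<subseteq> cball 0 R" "S' \<subseteq> cball 0 R"
  shows "integrable \<pi> (\<lambda>p. (norm (fst p - snd p))\<^sup>2)"
proof -
  interpret prob_space \<pi> using couplingD(2)[OF \<pi>] .
  show ?thesis
    by (rule integrable_const_bound[where B = "4 * R\<^sup>2"])
       (use coupling_cost_bounded[OF assms] in \<open>simp_all add: measurable_coupling[OF \<pi>]\<close>)
qed

lemma product_coupling:
  fixes \<mu> \<nu> :: "'a::euclidean_space measure"
  assumes \<mu>: "prob_on S \<mu>" and \<nu>: "prob_on S' \<nu>"
  shows "\<mu> \<Otimes>\<^sub>M \<nu> \<in> couplings \<mu> \<nu>"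
proof -
  interpret M: prob_space \<mu> using \<mu> by (simp add: prob_on_def)
  interpret N: prob_space \<nu> using \<nu> by (simp add: prob_on_def)
  interpret pair_prob_space \<mu> \<nu> ..
  have s\<mu>: "sets \<mu> = sets borel" and s\<nu>: "sets \<nu> = sets borel"
    using \<mu> \<nu> by (simp_all add: prob_on_sets)
  have "distr (\<mu> \<Otimes>\<^sub>M \<nu>) borel fst = distr (\<mu> \<Otimes>\<^sub>M \<nu>) \<mu> fst"
    by (rule distr_cong) (simp_all add: s\<mu>)
  also have "\<dots> = \<mu>" by (rule N.distr_pair_fst)
  finally have fst: "distr (\<mu> \<Otimes>\<^sub>M \<nu>) borel fst = \<mu>" .
  have "distr (\<mu> \<Otimes>\<^sub>M \<nu>) borel snd
      = distr (distr (\<nu> \<Otimes>\<^sub>M \<mu>) (\<mu> \<Otimes>\<^sub>M \<nu>) (\<lambda>(x, y). (y, x))) borel snd"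
    by (simp only: distr_pair_swap[symmetric])
  also have "\<dots> = distr (\<nu> \<Otimes>\<^sub>M \<mu>) \<nu> fst"
  proof -
    have "snd \<in> measurable (\<mu> \<Otimes>\<^sub>M \<nu>) borel"
      using measurable_snd[of \<mu> \<nu>] by (simp add: measurable_cong_sets[OF refl s\<nu>])
    then show ?thesis
      by (subst distr_distr) (auto intro!: distr_cong simp: comp_def case_prod_beta s\<nu>)
  qed
  also have "\<dots> = \<nu>" by (rule M.distr_pair_fst)
  finally have snd: "distr (\<mu> \<Otimes>\<^sub>M \<nu>) borel snd = \<nu>" .
  show ?thesis
    unfolding couplings_def using fst snd prob_space_axioms sets_pair_measure_cong[OF s\<mu> s\<nu>] by simp
qed

lemma graph_coupling:
  fixes \<mu> :: "'a::euclidean_space measure"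
  assumes \<mu>: "prob_on S \<mu>" and T: "T \<in> borel_measurable borel"
  shows "distr \<mu> (borel \<Otimes>\<^sub>M borel) (\<lambda>x. (x, T x)) \<in> couplings \<mu> (distr \<mu> borel T)"
proof -
  interpret prob_space \<mu> using \<mu> by (simp add: prob_on_def)
  have s\<mu>: "sets \<mu> = sets borel" using \<mu> by (rule prob_on_sets)
  have graph: "(\<lambda>x. (x, T x)) \<in> measurable \<mu> (borel \<Otimes>\<^sub>M borel)"
    using T by (simp add: measurable_cong_sets[OF s\<mu> refl])
  have "distr (distr \<mu> (borel \<Otimes>\<^sub>M borel) (\<lambda>x. (x, T x))) borel fst = distr \<mu> borel (\<lambda>x. x)"
    by (subst distr_distr[OF _ graph]) (simp_all add: comp_def)
  also have "\<dots> = \<mu>" by (rule distr_id2) (simp add: s\<mu>)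
  finally show ?thesis
    unfolding couplings_def using prob_space_distr[OF graph]
    by (simp add: distr_distr[OF _ graph] comp_def)
qed

lemma W2sq_le_coupling_cost:
  "\<pi> \<in> couplings \<mu> \<nu> \<Longrightarrow> W2sq \<mu> \<nu> \<le> (\<integral>\<^sup>+p. ennreal ((norm (fst p - snd p))\<^sup>2) \<partial>\<pi>)"
  unfolding W2sq_def by (rule INF_lower)

lemma W2sq_bounded:
  fixes \<mu> \<nu> :: "'a::euclidean_space measure"
  assumes \<mu>: "prob_on S \<mu>" and \<nu>: "prob_on S' \<nu>"
    and S: "S \<subseteq> cball 0 R" and S': "S' \<subseteq> cball 0 R"
  shows "W2sq \<mu> \<nu> \<le> ennreal (4 * R\<^sup>2)"
proof -
  have \<pi>: "\<mu> \<Otimes>\<^sub>M \<nu> \<in> couplings \<mu> \<nu>" by (rule product_coupling[OF \<mu> \<nu>])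
  interpret prob_space "\<mu> \<Otimes>\<^sub>M \<nu>" using couplingD(2)[OF \<pi>] .
  have "W2sq \<mu> \<nu> \<le> (\<integral>\<^sup>+p. ennreal ((norm (fst p - snd p))\<^sup>2) \<partial>(\<mu> \<Otimes>\<^sub>M \<nu>))"
    by (rule W2sq_le_coupling_cost[OF \<pi>])
  also have "\<dots> \<le> (\<integral>\<^sup>+p. ennreal (4 * R\<^sup>2) \<partial>(\<mu> \<Otimes>\<^sub>M \<nu>))"
    using coupling_cost_bounded[OF \<pi> assms]
    by (intro nn_integral_mono_AE) (auto elim: AE_mp intro: ennreal_leI)
  also have "\<dots> = ennreal (4 * R\<^sup>2)" by (simp add: emeasure_space_1)
  finally show ?thesis .
qed

lemma le_enn2real_of_ennreal_le:
  assumes "ennreal r \<le> x" and "x < top"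
  shows "r \<le> enn2real x"
proof (cases "0 \<le> r")
  case True
  then show ?thesis using enn2real_mono[OF assms] by simp
next
  case False
  then show ?thesis using enn2real_nonneg[of x] by linarith
qed

lemma W2sq_ge_dual:
  fixes \<phi> \<psi> :: "'a::euclidean_space \<Rightarrow> real"
  assumes \<mu>: "prob_on S \<mu>" and \<nu>: "prob_on S' \<nu>"
    and S: "S \<subseteq> cball 0 R" and S': "S' \<subseteq> cball 0 R"
    and \<phi>: "\<phi> \<in> borel_measurable borel" "integrable \<mu> \<phi>"
    and \<psi>: "\<psi> \<in> borel_measurable borel" "integrable \<nu> \<psi>"
    and dual: "\<And>x y. x \<in> S \<Longrightarrow> y \<in> S' \<Longrightarrow> \<phi> x + \<psi> y \<le> (norm (x - y))\<^sup>2"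
  shows "(\<integral>x. \<phi> x \<partial>\<mu>) + (\<integral>y. \<psi> y \<partial>\<nu>) \<le> enn2real (W2sq \<mu> \<nu>)"
proof (rule le_enn2real_of_ennreal_le)
  show "ennreal ((\<integral>x. \<phi> x \<partial>\<mu>) + (\<integral>y. \<psi> y \<partial>\<nu>)) \<le> W2sq \<mu> \<nu>"
    unfolding W2sq_def
  proof (rule INF_greatest)
    fix \<pi> assume \<pi>: "\<pi> \<in> couplings \<mu> \<nu>"
    note marginals = coupling_integrable_marginals[OF \<pi> \<phi> \<psi>]
    note cost = coupling_cost_integrable[OF \<pi> \<mu> \<nu> S S']
    have "(\<integral>x. \<phi> x \<partial>\<mu>) + (\<integral>y. \<psi> y \<partial>\<nu>) = (\<integral>p. \<phi> (fst p) + \<psi> (snd p) \<partial>\<pi>)"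
      using coupling_integral_marginals[OF \<pi> \<phi>(1) \<psi>(1)] marginals by simp
    also have "\<dots> \<le> (\<integral>p. (norm (fst p - snd p))\<^sup>2 \<partial>\<pi>)"
      using coupling_AE_supports[OF \<pi> \<mu> \<nu>] marginals cost
      by (intro integral_mono_AE) (auto elim!: AE_mp intro: dual)
    finally show "ennreal ((\<integral>x. \<phi> x \<partial>\<mu>) + (\<integral>y. \<psi> y \<partial>\<nu>))
        \<le> (\<integral>\<^sup>+p. ennreal ((norm (fst p - snd p))\<^sup>2) \<partial>\<pi>)"
      by (simp add: nn_integral_eq_integral[OF cost] ennreal_leI)
  qed
  show "W2sq \<mu> \<nu> < top"
    using W2sq_bounded[OF \<mu> \<nu> S S'] by (simp add: le_less_trans)
qed

lemma W2sq_pushforward_le: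
  fixes \<mu> :: "'a::euclidean_space measure"
  assumes \<mu>: "prob_on S \<mu>" and T: "T \<in> borel_measurable borel"
    and f: "integrable \<mu> f" and cost: "\<And>x. (norm (x - T x))\<^sup>2 \<le> f x"
  shows "enn2real (W2sq \<mu> (distr \<mu> borel T)) \<le> (\<integral>x. f x \<partial>\<mu>)"
proof (rule enn2real_leI)
  have f_nonneg: "0 \<le> f x" for x using cost[of x] zero_le_power2 order_trans by blast
  have graph: "(\<lambda>x. (x, T x)) \<in> measurable \<mu> (borel \<Otimes>\<^sub>M borel)"
    using T by (simp add: measurable_cong_sets[OF prob_on_sets[OF \<mu>] refl])
  have "W2sq \<mu> (distr \<mu> borel T)
      \<le> (\<integral>\<^sup>+p. ennreal ((norm (fst p - snd p))\<^sup>2) \<partial>distr \<mu> (borel \<Otimes>\<^sub>M borel) (\<lambda>x. (x, T x)))"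
    by (rule W2sq_le_coupling_cost[OF graph_coupling[OF \<mu> T]])
  also have "\<dots> = (\<integral>\<^sup>+x. ennreal ((norm (x - T x))\<^sup>2) \<partial>\<mu>)"
    by (simp add: nn_integral_distr[OF graph])
  also have "\<dots> \<le> (\<integral>\<^sup>+x. ennreal (f x) \<partial>\<mu>)"
    by (intro nn_integral_mono ennreal_leI cost)
  also have "\<dots> = ennreal (\<integral>x. f x \<partial>\<mu>)"
    using f_nonneg by (simp add: nn_integral_eq_integral[OF f])
  finally show "W2sq \<mu> (distr \<mu> borel T) \<le> ennreal (\<integral>x. f x \<partial>\<mu>)" .
  show "0 \<le> (\<integral>x. f x \<partial>\<mu>)" using f_nonneg by simp
qed

lemma borel_measurable_if_finite:
  fixes g :: "'a::euclidean_space \<Rightarrow> real"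
  assumes "finite F"
  shows "(\<lambda>y. if y \<in> F then g y else c) \<in> borel_measurable borel"
proof -
  have "(\<lambda>y. if y \<in> F then g y else c) = (\<lambda>y. c + (\<Sum>z\<in>F. if y = z then g z - c else 0))"
    using assms by (auto simp: sum.delta)
  then show ?thesis by simp
qed

lemma subgradient_potential_bounded:
  fixes u :: "'a::real_inner \<Rightarrow> real"
  assumes sub: "\<And>x z. u x + (z - x) \<bullet> T x \<le> u z"
    and T: "\<And>x. norm (T x) \<le> R" and x: "norm x \<le> r"
  shows "\<bar>u x\<bar> \<le> \<bar>u 0\<bar> + r * R"
proof -
  have bound: "\<bar>x \<bullet> T y\<bar> \<le> r * R" for y
    using Cauchy_Schwarz_ineq2[of x "T y"] mult_mono[OF x T[of y]] order_trans[OF norm_ge_zero x]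
    by simp
  have "u x \<le> u 0 + x \<bullet> T x" using sub[of x 0] by simp
  moreover have "u 0 + x \<bullet> T 0 \<le> u x" using sub[of 0 x] by simp
  ultimately show ?thesis using bound[of x] bound[of 0] by (simp add: abs_le_iff) linarith
qed

lemma subgradient_dual_potential:
  fixes u :: "'a::euclidean_space \<Rightarrow> real"
  assumes T: "finite (range T)" and sub: "\<And>x z. u x + (z - x) \<bullet> T x \<le> u z"
  obtains \<psi> where "\<psi> \<in> borel_measurable borel"
    and "\<And>x y. y \<in> range T \<Longrightarrow> (norm x)\<^sup>2 - 2 * u x + \<psi> y \<le> (norm (x - y))\<^sup>2"
    and "\<And>x. (norm (x - T x))\<^sup>2 \<le> (norm x)\<^sup>2 - 2 * u x + \<psi> (T x)"
proof
  \<comment> \<open>\<open>v\<close> is the convex conjugate of \<open>u\<close> on the range of \<open>T\<close>; Fenchel-Young is an equality along \<open>T\<close>.\<close>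
  define v where "v y = inv T y \<bullet> y - u (inv T y)" for y
  define \<psi> where "\<psi> y = (if y \<in> range T then (norm y)\<^sup>2 - 2 * v y else 0)" for y
  have young: "x \<bullet> y \<le> u x + v y" if "y \<in> range T" for x y
    using sub[of "inv T y" x] f_inv_into_f[OF that] by (simp add: v_def inner_diff_left)
  have young_eq: "u x + v (T x) \<le> x \<bullet> T x" for x
    using sub[of x "inv T (T x)"] f_inv_into_f[of "T x" T UNIV] by (simp add: v_def inner_diff_left)
  have norm_sq: "(norm (x - y))\<^sup>2 = (norm x)\<^sup>2 - 2 * (x \<bullet> y) + (norm y)\<^sup>2" for x y :: 'a
    by (simp add: power2_norm_eq_inner inner_diff inner_commute)
  show "\<psi> \<in> borel_measurable borel"
    unfolding \<psi>_def by (rule borel_measurable_if_finite[OF T])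
  show "(norm x)\<^sup>2 - 2 * u x + \<psi> y \<le> (norm (x - y))\<^sup>2" if "y \<in> range T" for x y
    using young[OF that, of x] that by (simp add: \<psi>_def norm_sq)
  show "(norm (x - T x))\<^sup>2 \<le> (norm x)\<^sup>2 - 2 * u x + \<psi> (T x)" for x
    using young_eq[of x] by (simp add: \<psi>_def norm_sq)
qed

(* The empty maximum is 0: the zero function is always one of the pieces. *)
fun max_affine :: "('a::real_inner \<times> real) list \<Rightarrow> 'a \<Rightarrow> real" where
  "max_affine [] x = 0"
| "max_affine (p # ps) x = max (x \<bullet> fst p - snd p) (max_affine ps x)"

fun max_affine_slope :: "('a::real_inner \<times> real) list \<Rightarrow> 'a \<Rightarrow> 'a" where
  "max_affine_slope [] x = 0"
| "max_affine_slope (p # ps) x =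
    (if max_affine ps x \<le> x \<bullet> fst p - snd p then fst p else max_affine_slope ps x)"

lemma max_affine_subgradient:
  "max_affine ps x + (z - x) \<bullet> max_affine_slope ps x \<le> max_affine ps z"
  by (induction ps) (auto simp: inner_diff_left)

lemma max_affine_slope_in: "max_affine_slope ps x \<in> insert 0 (fst ` set ps)"
  by (induction ps) auto

lemma borel_measurable_max_affine [measurable]:
  "max_affine ps \<in> borel_measurable (borel :: 'a::euclidean_space measure)"
  by (induction ps) (simp_all, measurable)

lemma borel_measurable_max_affine_slope [measurable]:
  "max_affine_slope ps \<in> borel_measurable (borel :: 'a::euclidean_space measure)"
proof (induction ps)
  case (Cons p ps)
  have eq: "max_affine_slope (p # ps)
      = (\<lambda>x. if max_affine ps x \<le> x \<bullet> fst p - snd p then fst p else max_affine_slope ps x)"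
    by (rule ext) simp
  show ?case unfolding eq using Cons.IH by measurable
qed simp

fun min_affine :: "real \<Rightarrow> ('a::real_inner \<times> real) list \<Rightarrow> 'a \<Rightarrow> real" where
  "min_affine C [] x = C"
| "min_affine C (p # ps) x = min (x \<bullet> fst p - snd p) (min_affine C ps x)"

lemma min_affine_le_bound: "min_affine C ps x \<le> C"
  by (induction ps) auto

lemma min_affine_le_piece: "p \<in> set ps \<Longrightarrow> min_affine C ps x \<le> x \<bullet> fst p - snd p"
  by (induction ps) auto

lemma min_affine_eq_bound: "(\<And>p. p \<in> set ps \<Longrightarrow> C \<le> x \<bullet> fst p - snd p) \<Longrightarrow> min_affine C ps x = C"
  by (induction ps) auto

lemma borel_measurable_min_affine [measurable]:
  "min_affine C ps \<in> borel_measurable (borel :: 'a::euclidean_space measure)"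
  by (induction ps) (simp_all, measurable)

lemma max_affine_neg_pieces:
  "0 < C \<Longrightarrow> max_affine (map (\<lambda>p. (- fst p, - snd p)) ps) x = max 0 (- min_affine C ps x)"
  by (induction ps) (auto simp: max_def min_def)

lemma max_affine_neg_shifted_pieces:
  "0 < C \<Longrightarrow> max_affine (map (\<lambda>p. (- fst p, - snd p - C)) ps) x = C - min_affine C ps x"
proof (induction ps)
  case (Cons p ps)
  then show ?case using min_affine_le_bound[of C ps x] by (auto simp: max_def min_def)
qed simp

lemma positive_part_min_affine_eq:
  assumes "0 < C"
  shows "max 0 (min_affine C ps x)
    = max_affine (map (\<lambda>p. (- fst p, - snd p)) ps) x
      - max_affine (map (\<lambda>p. (- fst p, - snd p - C)) ps) x + C"
  unfolding max_affine_neg_pieces[OF assms] max_affine_neg_shifted_pieces[OF assms] by (simp add: max_def)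

lemma tendsto_positive_part_min_affine:
  "(\<lambda>n. max 0 (min_affine (inverse (real (Suc n))) ps x) * real (Suc n))
    \<longlonglongrightarrow> (if \<forall>p\<in>set ps. 0 < x \<bullet> fst p - snd p then 1 else 0)"
proof (cases "\<forall>p\<in>set ps. 0 < x \<bullet> fst p - snd p")
  case True
  have "\<forall>p\<in>set ps. \<forall>\<^sub>F n in sequentially. inverse (real (Suc n)) < x \<bullet> fst p - snd p"
    using True order_tendstoD(2)[OF LIMSEQ_inverse_real_of_nat] by blast
  then have "\<forall>\<^sub>F n in sequentially. \<forall>p\<in>set ps. inverse (real (Suc n)) < x \<bullet> fst p - snd p"
    by (rule eventually_ball_finite[OF finite_set])
  then have "\<forall>\<^sub>F n in sequentially.
      max 0 (min_affine (inverse (real (Suc n))) ps x) * real (Suc n) = 1"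
    by eventually_elim (simp add: min_affine_eq_bound less_imp_le)
  then show ?thesis using True by (simp add: tendsto_eventually)
next
  case False
  then obtain p where "p \<in> set ps" "x \<bullet> fst p - snd p \<le> 0" by auto
  then have "max 0 (min_affine C ps x) = 0" for C
    using min_affine_le_piece order_trans by (metis max_absorb1)
  then show ?thesis by (subst if_not_P[OF False]) simp
qed

lemma box_affine_pieces:
  fixes lo hi :: "'a::euclidean_space"
  assumes s: "0 < s"
  obtains ps where "\<And>p. p \<in> set ps \<Longrightarrow> norm (fst p) = s"
    and "\<And>x. x \<in> box lo hi \<longleftrightarrow> (\<forall>p\<in>set ps. 0 < x \<bullet> fst p - snd p)"
proof -
  obtain bl where bl: "set bl = (Basis :: 'a set)" using finite_list[OF finite_Basis] by blast
  \<comment> \<open>Two affine pieces per coordinate, vanishing on the two faces of the box orthogonal to it.\<close>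
  define ps where "ps = concat (map (\<lambda>i. [(s *\<^sub>R i, s * (lo \<bullet> i)), (- (s *\<^sub>R i), - (s * (hi \<bullet> i)))]) bl)"
  have ps: "set ps = (\<lambda>i. (s *\<^sub>R i, s * (lo \<bullet> i))) ` Basis \<union> (\<lambda>i. (- (s *\<^sub>R i), - (s * (hi \<bullet> i)))) ` Basis"
    unfolding ps_def bl[symmetric] by auto
  show ?thesis
  proof (rule that)
    show "norm (fst p) = s" if "p \<in> set ps" for p
      using that s by (auto simp: ps)
    show "x \<in> box lo hi \<longleftrightarrow> (\<forall>p\<in>set ps. 0 < x \<bullet> fst p - snd p)" for x
      using s by (simp add: ps mem_box ball_Un Ball_image_comp comp_def ball_conj_distrib)
  qed
qed

lemma prob_on_eqI_box:
  fixes \<mu>\<^sub>1 \<mu>\<^sub>2 :: "'a::euclidean_space measure"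
  assumes \<mu>\<^sub>1: "prob_on S \<mu>\<^sub>1" and \<mu>\<^sub>2: "prob_on S' \<mu>\<^sub>2"
    and box: "\<And>lo hi. measure \<mu>\<^sub>1 (box lo hi) = measure \<mu>\<^sub>2 (box lo hi)"
  shows "\<mu>\<^sub>1 = \<mu>\<^sub>2"
proof -
  interpret M\<^sub>1: prob_space \<mu>\<^sub>1 using \<mu>\<^sub>1 by (simp add: prob_on_def)
  interpret M\<^sub>2: prob_space \<mu>\<^sub>2 using \<mu>\<^sub>2 by (simp add: prob_on_def)
  let ?E = "range (\<lambda>(lo, hi). box lo hi) :: 'a set set"
  let ?A = "\<lambda>n::nat. box (- (real n *\<^sub>R One)) (real n *\<^sub>R One) :: 'a set"
  show ?thesis
  proof (rule measure_eqI_generator_eq[where E = ?E and \<Omega> = UNIV and A = ?A])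
    show "Int_stable ?E" by (auto simp: Int_stable_def box_Int_box)
    show "sets \<mu>\<^sub>1 = sigma_sets UNIV ?E" "sets \<mu>\<^sub>2 = sigma_sets UNIV ?E"
      using \<mu>\<^sub>1 \<mu>\<^sub>2 by (simp_all add: prob_on_sets borel_eq_box)
    show "range ?A \<subseteq> ?E" "(\<Union>n. ?A n) = UNIV"
      unfolding UN_box_eq_UNIV by auto
    show "emeasure \<mu>\<^sub>1 X = emeasure \<mu>\<^sub>2 X" if "X \<in> ?E" for X
      using that box by (auto simp: M\<^sub>1.emeasure_eq_measure M\<^sub>2.emeasure_eq_measure)
  qed (simp_all add: M\<^sub>1.emeasure_eq_measure)
qed

definition W2_gap :: "'a::euclidean_space measure \<Rightarrow> 'a measure \<Rightarrow> 'a measure \<Rightarrow> real" where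
  "W2_gap \<mu>\<^sub>1 \<mu>\<^sub>2 \<nu> = (1/2) * enn2real (W2sq \<mu>\<^sub>1 \<nu>) - (1/2) * enn2real (W2sq \<mu>\<^sub>2 \<nu>)"

lemma D_CT_eq_SUP_W2_gap: "D_CT K \<mu>\<^sub>1 \<mu>\<^sub>2 = (SUP \<nu>\<in>{\<nu>. prob_on K \<nu>}. W2_gap \<mu>\<^sub>1 \<mu>\<^sub>2 \<nu>)"
  unfolding D_CT_def W2_gap_def ..

lemma W2_gap_swap: "W2_gap \<mu>\<^sub>2 \<mu>\<^sub>1 \<nu> = - W2_gap \<mu>\<^sub>1 \<mu>\<^sub>2 \<nu>"
  unfolding W2_gap_def by simp

lemma W2_gap_trans: "W2_gap \<mu>\<^sub>1 \<mu>\<^sub>2 \<nu> = W2_gap \<mu>\<^sub>1 \<mu>\<^sub>3 \<nu> + W2_gap \<mu>\<^sub>3 \<mu>\<^sub>2 \<nu>"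
  unfolding W2_gap_def by simp

locale CT_bounded =
  fixes \<Omega> K :: "'a::euclidean_space set" and R :: real
  assumes \<Omega>_subset_cball: "\<Omega> \<subseteq> cball 0 R" and K_subset_cball: "K \<subseteq> cball 0 R"
    and K_borel: "K \<in> sets borel" and zero_interior_K: "0 \<in> interior K"
begin

lemma zero_in_K: "0 \<in> K"
  using zero_interior_K interior_subset by blast

lemma prob_on_K_return_0: "prob_on K (return borel 0)"
  unfolding prob_on_def using zero_in_K K_borel by (simp add: prob_space_return emeasure_return)

lemma W2_gap_le_D_CT:
  assumes \<mu>\<^sub>1: "prob_on \<Omega> \<mu>\<^sub>1" and \<nu>: "prob_on K \<nu>"
  shows "W2_gap \<mu>\<^sub>1 \<mu>\<^sub>2 \<nu> \<le> D_CT K \<mu>\<^sub>1 \<mu>\<^sub>2"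
  unfolding D_CT_eq_SUP_W2_gap
proof (rule cSUP_upper)
  show "bdd_above (W2_gap \<mu>\<^sub>1 \<mu>\<^sub>2 ` {\<nu>. prob_on K \<nu>})"
  proof (rule bdd_aboveI2)
    fix \<nu>' assume "\<nu>' \<in> {\<nu>. prob_on K \<nu>}"
    then have "enn2real (W2sq \<mu>\<^sub>1 \<nu>') \<le> 4 * R\<^sup>2"
      using W2sq_bounded[OF \<mu>\<^sub>1 _ \<Omega>_subset_cball K_subset_cball] by (simp add: enn2real_leI)
    then show "W2_gap \<mu>\<^sub>1 \<mu>\<^sub>2 \<nu>' \<le> 2 * R\<^sup>2"
      unfolding W2_gap_def using enn2real_nonneg[of "W2sq \<mu>\<^sub>2 \<nu>'"] by linarith
  qed
qed (use \<nu> in simp)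

lemma D_CT_self: "D_CT K \<mu> \<mu> = 0"
proof -
  have "{\<nu>. prob_on K \<nu>} \<noteq> {}" using prob_on_K_return_0 by blast
  then show ?thesis unfolding D_CT_eq_SUP_W2_gap W2_gap_def by simp
qed

lemma D_CT_triangle:
  assumes "prob_on \<Omega> \<mu>\<^sub>1" "prob_on \<Omega> \<mu>\<^sub>3"
  shows "D_CT K \<mu>\<^sub>1 \<mu>\<^sub>2 \<le> D_CT K \<mu>\<^sub>1 \<mu>\<^sub>3 + D_CT K \<mu>\<^sub>3 \<mu>\<^sub>2"
  unfolding D_CT_eq_SUP_W2_gap[of K \<mu>\<^sub>1 \<mu>\<^sub>2]
proof (rule cSUP_least)
  show "{\<nu>. prob_on K \<nu>} \<noteq> {}" using prob_on_K_return_0 by blast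
  fix \<nu> assume "\<nu> \<in> {\<nu>. prob_on K \<nu>}"
  then show "W2_gap \<mu>\<^sub>1 \<mu>\<^sub>2 \<nu> \<le> D_CT K \<mu>\<^sub>1 \<mu>\<^sub>3 + D_CT K \<mu>\<^sub>3 \<mu>\<^sub>2"
    unfolding W2_gap_trans[of \<mu>\<^sub>1 \<mu>\<^sub>2 \<nu> \<mu>\<^sub>3] using assms by (intro add_mono W2_gap_le_D_CT) auto
qed

lemma d_CT_nonneg:
  assumes "prob_on \<Omega> \<mu>\<^sub>1" "prob_on \<Omega> \<mu>\<^sub>2"
  shows "0 \<le> d_CT K \<mu>\<^sub>1 \<mu>\<^sub>2"
  using W2_gap_le_D_CT[OF assms(1) prob_on_K_return_0, of \<mu>\<^sub>2]
    W2_gap_le_D_CT[OF assms(2) prob_on_K_return_0, of \<mu>\<^sub>1]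
  unfolding d_CT_def W2_gap_swap[of \<mu>\<^sub>2 \<mu>\<^sub>1] by linarith

lemma d_CT_triangle:
  assumes "prob_on \<Omega> \<mu>\<^sub>1" "prob_on \<Omega> \<mu>\<^sub>2" "prob_on \<Omega> \<mu>\<^sub>3"
  shows "d_CT K \<mu>\<^sub>1 \<mu>\<^sub>2 \<le> d_CT K \<mu>\<^sub>1 \<mu>\<^sub>3 + d_CT K \<mu>\<^sub>3 \<mu>\<^sub>2"
  using D_CT_triangle[OF assms(1,3), of \<mu>\<^sub>2] D_CT_triangle[OF assms(2,3), of \<mu>\<^sub>1]
  unfolding d_CT_def by linarith

lemma integrable_subgradient_potential:
  fixes u :: "'a \<Rightarrow> real"
  assumes \<mu>: "prob_on \<Omega> \<mu>" and u: "u \<in> borel_measurable borel"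
    and sub: "\<And>x z. u x + (z - x) \<bullet> T x \<le> u z" and TK: "\<And>x. T x \<in> K"
  shows "integrable \<mu> u"
proof (rule prob_on_integrable[OF \<mu> u])
  fix x assume "x \<in> \<Omega>"
  then show "\<bar>u x\<bar> \<le> \<bar>u 0\<bar> + R * R"
    using \<Omega>_subset_cball K_subset_cball TK
    by (intro subgradient_potential_bounded[OF sub]) (auto simp: subset_iff)
qed

lemma integrable_norm_sq: "prob_on \<Omega> \<mu> \<Longrightarrow> integrable \<mu> (\<lambda>x. (norm x)\<^sup>2)"
  using \<Omega>_subset_cball
  by (intro prob_on_integrable[of \<Omega> _ _ "R\<^sup>2"]) (auto intro!: power_mono simp: subset_iff)

lemma D_CT_ge_subgradient_gap:
  fixes u :: "'a \<Rightarrow> real"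
  assumes \<mu>\<^sub>1: "prob_on \<Omega> \<mu>\<^sub>1" and \<mu>\<^sub>2: "prob_on \<Omega> \<mu>\<^sub>2"
    and T: "T \<in> borel_measurable borel" "finite (range T)" and TK: "\<And>x. T x \<in> K"
    and u: "u \<in> borel_measurable borel" and sub: "\<And>x z. u x + (z - x) \<bullet> T x \<le> u z"
  shows "((\<integral>x. (norm x)\<^sup>2 \<partial>\<mu>\<^sub>1) - (\<integral>x. (norm x)\<^sup>2 \<partial>\<mu>\<^sub>2)) / 2 - (\<integral>x. u x \<partial>\<mu>\<^sub>1) + (\<integral>x. u x \<partial>\<mu>\<^sub>2)
    \<le> D_CT K \<mu>\<^sub>1 \<mu>\<^sub>2"
proof -
  define \<nu> where "\<nu> = distr \<mu>\<^sub>2 borel T"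
  have "range T \<in> sets borel" using T(2) by (simp add: borel_closed finite_imp_closed)
  then have \<nu>_range: "prob_on (range T) \<nu>" and \<nu>_K: "prob_on K \<nu>"
    unfolding \<nu>_def using K_borel TK by (auto intro: prob_on_distr[OF \<mu>\<^sub>2 T(1)])
  have range_T: "range T \<subseteq> cball 0 R" using TK K_subset_cball by blast
  obtain \<psi> where \<psi>_borel: "\<psi> \<in> borel_measurable borel"
    and dual: "\<And>x y. y \<in> range T \<Longrightarrow> (norm x)\<^sup>2 - 2 * u x + \<psi> y \<le> (norm (x - y))\<^sup>2"
    and transport: "\<And>x. (norm (x - T x))\<^sup>2 \<le> (norm x)\<^sup>2 - 2 * u x + \<psi> (T x)"
    using subgradient_dual_potential[OF T(2) sub] by blast
  define \<phi> where "\<phi> x = (norm x)\<^sup>2 - 2 * u x" for x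
  have \<phi>_borel: "\<phi> \<in> borel_measurable borel" unfolding \<phi>_def using u by measurable
  have \<phi>_int: "integrable \<mu> \<phi>" and \<phi>_integral: "(\<integral>x. \<phi> x \<partial>\<mu>) = (\<integral>x. (norm x)\<^sup>2 \<partial>\<mu>) - 2 * (\<integral>x. u x \<partial>\<mu>)"
    if "prob_on \<Omega> \<mu>" for \<mu>
    using integrable_subgradient_potential[OF that u sub TK] integrable_norm_sq[OF that]
    unfolding \<phi>_def by simp_all
  obtain B where "\<And>y. y \<in> range T \<Longrightarrow> \<bar>\<psi> y\<bar> \<le> B"
    using T(2) by (metis Max_ge finite_imageI image_eqI)
  then have \<psi>_int: "integrable \<nu> \<psi>" by (rule prob_on_integrable[OF \<nu>_range \<psi>_borel])
  have \<psi>T_int: "integrable \<mu>\<^sub>2 (\<lambda>x. \<psi> (T x))" and \<psi>_integral: "(\<integral>y. \<psi> y \<partial>\<nu>) = (\<integral>x. \<psi> (T x) \<partial>\<mu>\<^sub>2)"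
    using \<psi>_int \<psi>_borel T(1) integrable_distr_eq[of T \<mu>\<^sub>2 borel \<psi>] integral_distr[of T \<mu>\<^sub>2 borel \<psi>]
    by (simp_all add: \<nu>_def measurable_cong_sets[OF prob_on_sets[OF \<mu>\<^sub>2] refl])
  have lower: "(\<integral>x. \<phi> x \<partial>\<mu>\<^sub>1) + (\<integral>y. \<psi> y \<partial>\<nu>) \<le> enn2real (W2sq \<mu>\<^sub>1 \<nu>)"
    using dual unfolding \<phi>_def[symmetric]
    by (intro W2sq_ge_dual[OF \<mu>\<^sub>1 \<nu>_range \<Omega>_subset_cball range_T \<phi>_borel \<phi>_int[OF \<mu>\<^sub>1] \<psi>_borel \<psi>_int])
  have "enn2real (W2sq \<mu>\<^sub>2 \<nu>) \<le> (\<integral>x. \<phi> x + \<psi> (T x) \<partial>\<mu>\<^sub>2)"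
    unfolding \<nu>_def using \<phi>_int[OF \<mu>\<^sub>2] \<psi>T_int transport unfolding \<phi>_def[symmetric]
    by (intro W2sq_pushforward_le[OF \<mu>\<^sub>2 T(1)]) simp_all
  then have upper: "enn2real (W2sq \<mu>\<^sub>2 \<nu>) \<le> (\<integral>x. \<phi> x \<partial>\<mu>\<^sub>2) + (\<integral>y. \<psi> y \<partial>\<nu>)"
    using \<phi>_int[OF \<mu>\<^sub>2] \<psi>T_int by (simp add: \<psi>_integral)
  have "((\<integral>x. \<phi> x \<partial>\<mu>\<^sub>1) - (\<integral>x. \<phi> x \<partial>\<mu>\<^sub>2)) / 2 \<le> W2_gap \<mu>\<^sub>1 \<mu>\<^sub>2 \<nu>"
    using lower upper unfolding W2_gap_def by (simp add: field_simps)
  also have "\<dots> \<le> D_CT K \<mu>\<^sub>1 \<mu>\<^sub>2" by (rule W2_gap_le_D_CT[OF \<mu>\<^sub>1 \<nu>_K])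
  finally show ?thesis by (simp add: \<phi>_integral[OF \<mu>\<^sub>1] \<phi>_integral[OF \<mu>\<^sub>2] field_simps)
qed

lemma max_affine_slope_in_K: "fst ` set ps \<subseteq> K \<Longrightarrow> max_affine_slope ps x \<in> K"
  using max_affine_slope_in[of ps x] zero_in_K by auto

lemma D_CT_ge_max_affine_gap:
  assumes \<mu>\<^sub>1: "prob_on \<Omega> \<mu>\<^sub>1" and \<mu>\<^sub>2: "prob_on \<Omega> \<mu>\<^sub>2" and slopes: "fst ` set ps \<subseteq> K"
  shows "((\<integral>x. (norm x)\<^sup>2 \<partial>\<mu>\<^sub>1) - (\<integral>x. (norm x)\<^sup>2 \<partial>\<mu>\<^sub>2)) / 2
      - (\<integral>x. max_affine ps x \<partial>\<mu>\<^sub>1) + (\<integral>x. max_affine ps x \<partial>\<mu>\<^sub>2) \<le> D_CT K \<mu>\<^sub>1 \<mu>\<^sub>2"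
proof (rule D_CT_ge_subgradient_gap[OF \<mu>\<^sub>1 \<mu>\<^sub>2 borel_measurable_max_affine_slope _
      max_affine_slope_in_K[OF slopes] borel_measurable_max_affine max_affine_subgradient])
  have "range (max_affine_slope ps) \<subseteq> insert 0 (fst ` set ps)"
    using max_affine_slope_in by blast
  then show "finite (range (max_affine_slope ps))"
    by (rule finite_subset) simp
qed

lemma integral_max_affine_eq:
  assumes \<mu>\<^sub>1: "prob_on \<Omega> \<mu>\<^sub>1" and \<mu>\<^sub>2: "prob_on \<Omega> \<mu>\<^sub>2" and slopes: "fst ` set ps \<subseteq> K"
    and d: "d_CT K \<mu>\<^sub>1 \<mu>\<^sub>2 = 0"
  shows "(\<integral>x. max_affine ps x \<partial>\<mu>\<^sub>1) = (\<integral>x. max_affine ps x \<partial>\<mu>\<^sub>2)"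
proof -
  let ?m = "\<lambda>\<mu>. \<integral>x. (norm x)\<^sup>2 \<partial>\<mu>" and ?I = "\<lambda>\<mu>. \<integral>x. max_affine ps x \<partial>\<mu>"
  define q where "q = (?m \<mu>\<^sub>1 - ?m \<mu>\<^sub>2) / 2"
  have zero: "max_affine [] = (\<lambda>x. 0 :: real)" by auto
  \<comment> \<open>For \<open>ps = []\<close> the two bounds involve only second moments, and \<open>d_CT = 0\<close> makes them sharp.\<close>
  have "q \<le> D_CT K \<mu>\<^sub>1 \<mu>\<^sub>2" "- q \<le> D_CT K \<mu>\<^sub>2 \<mu>\<^sub>1"
    using D_CT_ge_max_affine_gap[OF \<mu>\<^sub>1 \<mu>\<^sub>2, of "[]"] D_CT_ge_max_affine_gap[OF \<mu>\<^sub>2 \<mu>\<^sub>1, of "[]"]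
    by (simp_all add: zero q_def field_simps)
  moreover have "q - ?I \<mu>\<^sub>1 + ?I \<mu>\<^sub>2 \<le> D_CT K \<mu>\<^sub>1 \<mu>\<^sub>2" "- q - ?I \<mu>\<^sub>2 + ?I \<mu>\<^sub>1 \<le> D_CT K \<mu>\<^sub>2 \<mu>\<^sub>1"
    using D_CT_ge_max_affine_gap[OF \<mu>\<^sub>1 \<mu>\<^sub>2 slopes] D_CT_ge_max_affine_gap[OF \<mu>\<^sub>2 \<mu>\<^sub>1 slopes]
    by (simp_all add: q_def field_simps)
  moreover have "D_CT K \<mu>\<^sub>1 \<mu>\<^sub>2 + D_CT K \<mu>\<^sub>2 \<mu>\<^sub>1 = 0" using d by (simp add: d_CT_def)
  ultimately show ?thesis by (intro order_antisym) linarith+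
qed

lemma integrable_max_affine:
  assumes \<mu>: "prob_on \<Omega> \<mu>" and slopes: "fst ` set ps \<subseteq> K"
  shows "integrable \<mu> (max_affine ps)"
  by (rule integrable_subgradient_potential[OF \<mu> borel_measurable_max_affine max_affine_subgradient
      max_affine_slope_in_K[OF slopes]])

lemma integral_positive_part_min_affine_eq:
  assumes \<mu>\<^sub>1: "prob_on \<Omega> \<mu>\<^sub>1" and \<mu>\<^sub>2: "prob_on \<Omega> \<mu>\<^sub>2" and slopes: "\<And>p. p \<in> set ps \<Longrightarrow> - fst p \<in> K"
    and d: "d_CT K \<mu>\<^sub>1 \<mu>\<^sub>2 = 0" and C: "0 < C"
  shows "(\<integral>x. max 0 (min_affine C ps x) \<partial>\<mu>\<^sub>1) = (\<integral>x. max 0 (min_affine C ps x) \<partial>\<mu>\<^sub>2)"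
proof -
  define ps\<^sub>1 where "ps\<^sub>1 = map (\<lambda>p. (- fst p, - snd p)) ps"
  define ps\<^sub>2 where "ps\<^sub>2 = map (\<lambda>p. (- fst p, - snd p - C)) ps"
  have slopes\<^sub>1: "fst ` set ps\<^sub>1 \<subseteq> K" and slopes\<^sub>2: "fst ` set ps\<^sub>2 \<subseteq> K"
    using slopes by (auto simp: ps\<^sub>1_def ps\<^sub>2_def)
  have integral: "(\<integral>x. max 0 (min_affine C ps x) \<partial>\<mu>)
      = (\<integral>x. max_affine ps\<^sub>1 x \<partial>\<mu>) - (\<integral>x. max_affine ps\<^sub>2 x \<partial>\<mu>) + C"
    if \<mu>: "prob_on \<Omega> \<mu>" for \<mu>
  proof -
    interpret prob_space \<mu> using \<mu> by (simp add: prob_on_def)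
    note integrable = integrable_max_affine[OF \<mu> slopes\<^sub>1] integrable_max_affine[OF \<mu> slopes\<^sub>2]
    have "(\<integral>x. max 0 (min_affine C ps x) \<partial>\<mu>) = (\<integral>x. max_affine ps\<^sub>1 x - max_affine ps\<^sub>2 x + C \<partial>\<mu>)"
      unfolding positive_part_min_affine_eq[OF C] ps\<^sub>1_def ps\<^sub>2_def ..
    also have "\<dots> = (\<integral>x. max_affine ps\<^sub>1 x \<partial>\<mu>) - (\<integral>x. max_affine ps\<^sub>2 x \<partial>\<mu>) + C"
      using integrable by (simp add: Bochner_Integration.integral_add Bochner_Integration.integral_diff prob_space)
    finally show ?thesis .
  qed
  show ?thesis
    using integral[OF \<mu>\<^sub>1] integral[OF \<mu>\<^sub>2]
      integral_max_affine_eq[OF \<mu>\<^sub>1 \<mu>\<^sub>2 slopes\<^sub>1 d] integral_max_affine_eq[OF \<mu>\<^sub>1 \<mu>\<^sub>2 slopes\<^sub>2 d]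
    by simp
qed

lemma measure_box_eq_of_d_CT_eq_0:
  assumes \<mu>\<^sub>1: "prob_on \<Omega> \<mu>\<^sub>1" and \<mu>\<^sub>2: "prob_on \<Omega> \<mu>\<^sub>2" and d: "d_CT K \<mu>\<^sub>1 \<mu>\<^sub>2 = 0"
  shows "measure \<mu>\<^sub>1 (box lo hi) = measure \<mu>\<^sub>2 (box lo hi)"
proof -
  obtain r where r: "0 < r" "ball 0 r \<subseteq> K" using zero_interior_K mem_interior by blast
  define s where "s = r / 2"
  have s: "0 < s" "s < r" using r(1) by (simp_all add: s_def)
  obtain ps where norm_ps: "\<And>p. p \<in> set ps \<Longrightarrow> norm (fst p) = s"
    and box: "\<And>x. x \<in> box lo hi \<longleftrightarrow> (\<forall>p\<in>set ps. 0 < x \<bullet> fst p - snd p)"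
    using box_affine_pieces[OF s(1)] by blast
  have slopes: "- fst p \<in> K" if "p \<in> set ps" for p
    using norm_ps[OF that] s(2) r(2) by auto
  define G where "G n x = max 0 (min_affine (inverse (real (Suc n))) ps x) * real (Suc n)" for n x
  have G_lim: "(\<lambda>n. G n x) \<longlonglongrightarrow> indicator (box lo hi) x" for x
  proof -
    have "indicator (box lo hi) x = (if \<forall>p\<in>set ps. 0 < x \<bullet> fst p - snd p then 1 else 0 :: real)"
      by (simp add: box)
    then show ?thesis unfolding G_def by (simp only: tendsto_positive_part_min_affine)
  qed
  have G_bound: "norm (G n x) \<le> 1" for n x
    using min_affine_le_bound[of "inverse (real (Suc n))" ps x]
    by (simp add: G_def field_simps max_def)
  have G_borel: "G n \<in> borel_measurable borel" for n unfolding G_def by measurable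
  have G_integral: "(\<integral>x. G n x \<partial>\<mu>\<^sub>1) = (\<integral>x. G n x \<partial>\<mu>\<^sub>2)" for n
    unfolding G_def using integral_positive_part_min_affine_eq[OF \<mu>\<^sub>1 \<mu>\<^sub>2 slopes d] by simp
  have G_conv: "(\<lambda>n. \<integral>x. G n x \<partial>\<mu>) \<longlonglongrightarrow> measure \<mu> (box lo hi)" if \<mu>: "prob_on \<Omega> \<mu>" for \<mu>
  proof -
    interpret prob_space \<mu> using \<mu> by (simp add: prob_on_def)
    have "(\<lambda>n. \<integral>x. G n x \<partial>\<mu>) \<longlonglongrightarrow> (\<integral>x. indicator (box lo hi) x \<partial>\<mu>)"
      using G_lim G_bound G_borel
      by (intro integral_dominated_convergence[where w = "\<lambda>_. 1"])
         (simp_all add: measurable_cong_sets[OF prob_on_sets[OF \<mu>] refl])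
    then show ?thesis by (simp add: prob_on_space[OF \<mu>])
  qed
  show ?thesis using G_conv[OF \<mu>\<^sub>1] G_conv[OF \<mu>\<^sub>2] G_integral LIMSEQ_unique by simp
qed

lemma d_CT_eq_0_iff:
  assumes "prob_on \<Omega> \<mu>\<^sub>1" "prob_on \<Omega> \<mu>\<^sub>2"
  shows "d_CT K \<mu>\<^sub>1 \<mu>\<^sub>2 = 0 \<longleftrightarrow> \<mu>\<^sub>1 = \<mu>\<^sub>2"
  using prob_on_eqI_box[OF assms measure_box_eq_of_d_CT_eq_0[OF assms]]
  by (auto simp: d_CT_def D_CT_self)

end

theorem theorem2:
  fixes \<Omega> K :: "'a::euclidean_space set"
  assumes "open \<Omega>" and "bounded \<Omega>" and "convex \<Omega>"
    and "compact K" and "0 \<in> interior K"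
  shows "(\<forall>\<mu>p \<mu>m. prob_on \<Omega> \<mu>p \<and> prob_on \<Omega> \<mu>m \<longrightarrow> d_CT K \<mu>p \<mu>m \<ge> 0)
    \<and> (\<forall>\<mu>p \<mu>m. prob_on \<Omega> \<mu>p \<and> prob_on \<Omega> \<mu>m \<longrightarrow> (d_CT K \<mu>p \<mu>m = 0 \<longleftrightarrow> \<mu>p = \<mu>m))
    \<and> (\<forall>\<mu>1 \<mu>2 \<mu>3. prob_on \<Omega> \<mu>1 \<and> prob_on \<Omega> \<mu>2 \<and> prob_on \<Omega> \<mu>3 \<longrightarrow>
          d_CT K \<mu>1 \<mu>2 \<le> d_CT K \<mu>1 \<mu>3 + d_CT K \<mu>3 \<mu>2)"
proof -
  obtain R where "\<forall>x\<in>\<Omega> \<union> K. norm x \<le> R"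
    using bounded_pos \<open>bounded \<Omega>\<close> compact_imp_bounded[OF \<open>compact K\<close>] bounded_Un by metis
  then interpret CT_bounded \<Omega> K R
    using \<open>compact K\<close> \<open>0 \<in> interior K\<close>
    by unfold_locales (auto simp: compact_imp_closed borel_closed)
  show ?thesis using d_CT_nonneg d_CT_eq_0_iff d_CT_triangle by blast
qed

end
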